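(* In the model and protocol $\mathrm{OciorABA}^*$ described in the context, with $n\ge 3t+1$, if every honest node receives an input message, then every honest node eventually outputs a value and terminates.
   Context: Model: there are $n$ nodes $\mathrm{Node}_1,\dots,\mathrm{Node}_n$ in an asynchronous network (every message sent between honest nodes is eventually delivered, with arbitrary adversarial delay). An adaptive adversary may corrupt (make dishonest/Byzantine) at most $t$ nodes in total; $\mathcal F\subseteq[1:n]$ denotes the set of dishonest nodes; $n\ge 3t+1$. Primitives used as black boxes: (RBC) For each $j\in[1:n]$ there is a reliable broadcast instance $\mathrm{RBC}_j$ with leader $\mathrm{Node}_j$, satisfying: Consistency (if two honest nodes output $w',w''$ then $w'=w''$); Validity (if the leader is honest and inputs $w$, every honest node eventually outputs $w$); Totality (if one honest node outputs a value, every honest node eventually outputs a value). (ABBA) For each $j\in[1:n]$ there is a binary Byzantine agreement instance $\mathrm{ABBA}_j$ (inputs and outputs in $\{0,1\}$), satisfying: Termination (if all honest nodes provide inputs, every honest node eventually outputs a value and terminates); Consistency (if an honest node outputs $b$, every honest node eventually outputs $b$); Validity (if all honest nodes input the same $b$, every honest node eventually outputs $b$). (Erasure code) An $(n,t+1)$ erasure code over an alphabet $\Sigma$: an encoder $\mathrm{Enc}$ mapping a message $w$ to $(\mathrm{Enc}_1(w),\dots,\mathrm{Enc}_n(w))\in\Sigma^n$ and a decoder $\mathrm{Dec}$ such that for every set $K\subseteq[1:n]$ with $|K|=t+1$, $\mathrm{Dec}(\{\mathrm{Enc}_j(w)\}_{j\in K})=w$. Protocol $\mathrm{OciorABA}^*$,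 code for an honest $\mathrm{Node}_i$ with input message $w_i$: (1) Compute $(y^{(i)}_1,\dots,y^{(i)}_n)=\mathrm{Enc}(w_i)$ and input $y^{(i)}_i$ into $\mathrm{RBC}_i$ (as leader). (2) Upon delivery of a value $y^{(j)}_j$ from $\mathrm{RBC}_j$ (after step (1) has been executed), if $\mathrm{Node}_i$ has not yet given an input to $\mathrm{ABBA}_j$: set $a_i[j]=1$ if $y^{(j)}_j=y^{(i)}_j$ and $a_i[j]=0$ otherwise, and input $a_i[j]$ into $\mathrm{ABBA}_j$. (3) Upon obtaining outputs from $n-t$ of the instances $\mathrm{ABBA}_1,\dots,\mathrm{ABBA}_n$, input $0$ into every $\mathrm{ABBA}_j$ to which $\mathrm{Node}_i$ has not yet given an input. (4) Upon obtaining outputs from all $n$ ABBA instances: let $S=\{j:\mathrm{ABBA}_j\text{ output }1\}$. If $|S|<t+1$, output a default value $\bot$ and terminate. Otherwise let $K$ be the set of the $t+1$ smallest elements of $S$, wait for delivery of $y^{(j)}_j$ from $\mathrm{RBC}_j$ for all $j\in K$, output $\mathrm{Dec}(\{y^{(j)}_j\}_{j\in K})$ and terminate. *)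

theory Defs
  imports Main
begin

text \<open>
  Nodes are 1..n; F is the set of nodes that are ever
  corrupted (adaptive adversary); honest nodes are those in {1..n} - F.
  Time is discrete (nat); an event that "eventually" happens is recorded as
  Some (time, value), an event that never happens as None.  Delivery scheduling and
  the behaviour of dishonest nodes are arbitrary (adversarial): they are not
  constrained except through the black-box guarantees below.
\<close>

definition honest :: "nat \<Rightarrow> nat set \<Rightarrow> nat set" where
  "honest n F = {1..n} - F"

text \<open>(n, t+1) erasure code: decoding from any t+1 coordinates.  The coordinates
  {Enc_j(w)}_{j in K} are passed as the function j |-> Enc w j together with K.\<close>
definition erasure_code :: "nat \<Rightarrow> nat \<Rightarrow> ('m \<Rightarrow> nat \<Rightarrow> 's) \<Rightarrow> ((nat \<Rightarrow> 's) \<Rightarrow> nat set \<Rightarrow> 'm) \<Rightarrow> bool" where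
  "erasure_code n t Enc Dec \<longleftrightarrow>
     (\<forall>w K. K \<subseteq> {1..n} \<longrightarrow> card K = t + 1 \<longrightarrow> Dec (\<lambda>j. Enc w j) K = w)
   \<and> (\<forall>f g K. (\<forall>j\<in>K. f j = g j) \<longrightarrow> Dec f K = Dec g K)"

text \<open>RBC guarantees. rbc_in j = leader input of RBC_j (time, value);
  rbc_out i j = output of RBC_j at node i (time, value).\<close>
definition RBC_props :: "nat \<Rightarrow> nat set \<Rightarrow> (nat \<Rightarrow> (nat \<times> 's) option)
      \<Rightarrow> (nat \<Rightarrow> nat \<Rightarrow> (nat \<times> 's) option) \<Rightarrow> bool" where
  "RBC_props n F rbc_in rbc_out \<longleftrightarrow>
    (\<forall>j\<in>{1..n}.
      (\<forall>i\<in>honest n F. \<forall>i'\<in>honest n F. \<forall>s s' w' w''.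
          rbc_out i j = Some (s, w') \<longrightarrow> rbc_out i' j = Some (s', w'') \<longrightarrow> w' = w'')
    \<and> (j \<in> honest n F \<longrightarrow> (\<forall>s w. rbc_in j = Some (s, w) \<longrightarrow>
          (\<forall>i\<in>honest n F. \<exists>s'. rbc_out i j = Some (s', w))))
    \<and> ((\<exists>i\<in>honest n F. rbc_out i j \<noteq> None) \<longrightarrow> (\<forall>i\<in>honest n F. rbc_out i j \<noteq> None)))"

text \<open>ABBA guarantees. abba_in i j / abba_out i j = input / output of node i in ABBA_j.\<close>
definition ABBA_props :: "nat \<Rightarrow> nat set \<Rightarrow> (nat \<Rightarrow> nat \<Rightarrow> (nat \<times> bool) option)
      \<Rightarrow> (nat \<Rightarrow> nat \<Rightarrow> (nat \<times> bool) option) \<Rightarrow> bool" where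
  "ABBA_props n F abba_in abba_out \<longleftrightarrow>
    (\<forall>j\<in>{1..n}.
      ((\<forall>i\<in>honest n F. abba_in i j \<noteq> None) \<longrightarrow> (\<forall>i\<in>honest n F. abba_out i j \<noteq> None))
    \<and> (\<forall>i\<in>honest n F. \<forall>s b. abba_out i j = Some (s, b) \<longrightarrow>
          (\<forall>i'\<in>honest n F. \<exists>s'. abba_out i' j = Some (s', b)))
    \<and> (\<forall>b. (\<forall>i\<in>honest n F. \<exists>s. abba_in i j = Some (s, b)) \<longrightarrow>
          (\<forall>i\<in>honest n F. \<exists>s. abba_out i j = Some (s, b))))"

definition has_out_by :: "(nat \<Rightarrow> nat \<Rightarrow> (nat \<times> bool) option) \<Rightarrow> nat \<Rightarrow> nat \<Rightarrow> nat \<Rightarrow> bool" where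
  "has_out_by abba_out i j s \<longleftrightarrow> (\<exists>s'\<le>s. \<exists>b. abba_out i j = Some (s', b))"

definition smallest :: "nat \<Rightarrow> nat set \<Rightarrow> nat set" where
  "smallest k S = {j\<in>S. card {j'\<in>S. j' < j} < k}"

text \<open>Protocol OciorABA* followed by honest node i, who receives input w at time tau.
  out i = Some (r, v): node i outputs v at time r and terminates (v = None is the default bot).\<close>
definition follows_protocol :: "nat \<Rightarrow> nat \<Rightarrow> ('m \<Rightarrow> nat \<Rightarrow> 's) \<Rightarrow> ((nat \<Rightarrow> 's) \<Rightarrow> nat set \<Rightarrow> 'm)
      \<Rightarrow> nat \<Rightarrow> nat \<Rightarrow> 'm
      \<Rightarrow> (nat \<Rightarrow> (nat \<times> 's) option) \<Rightarrow> (nat \<Rightarrow> nat \<Rightarrow> (nat \<times> 's) option)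
      \<Rightarrow> (nat \<Rightarrow> nat \<Rightarrow> (nat \<times> bool) option) \<Rightarrow> (nat \<Rightarrow> nat \<Rightarrow> (nat \<times> bool) option)
      \<Rightarrow> (nat \<Rightarrow> (nat \<times> 'm option) option) \<Rightarrow> bool" where
  "follows_protocol n t Enc Dec i tau w rbc_in rbc_out abba_in abba_out out \<longleftrightarrow>
     \<comment> \<open>step (1)\<close>
     rbc_in i = Some (tau, Enc w i)
     \<comment> \<open>step (2): upon delivery from RBC_j (after step 1), an input to ABBA_j is given\<close>
   \<and> (\<forall>j\<in>{1..n}. \<forall>s y. rbc_out i j = Some (s, y) \<longrightarrow>
          (\<exists>r b. r \<le> max s tau \<and> abba_in i j = Some (r, b)))
     \<comment> \<open>step (3): upon n-t ABBA outputs, inputs to all remaining ABBA instances\<close>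
   \<and> (\<forall>s. card {j\<in>{1..n}. has_out_by abba_out i j s} \<ge> n - t \<longrightarrow>
          (\<forall>j\<in>{1..n}. \<exists>r b. r \<le> s \<and> abba_in i j = Some (r, b)))
     \<comment> \<open>every ABBA input is produced by step (2) or step (3)\<close>
   \<and> (\<forall>j\<in>{1..n}. \<forall>r b. abba_in i j = Some (r, b) \<longrightarrow>
          (\<exists>s y. rbc_out i j = Some (s, y) \<and> s \<le> r \<and> tau \<le> r \<and> b = (y = Enc w j))
        \<or> (b = False \<and> card {j'\<in>{1..n}. has_out_by abba_out i j' r} \<ge> n - t))
     \<comment> \<open>step (4)\<close>
   \<and> (\<forall>s. (\<forall>j\<in>{1..n}. has_out_by abba_out i j s) \<longrightarrow>
          (let S = {j\<in>{1..n}. \<exists>s'. abba_out i j = Some (s', True)} in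
            (card S < t + 1 \<longrightarrow> (\<exists>r\<le>s. out i = Some (r, None)))
          \<and> (card S \<ge> t + 1 \<longrightarrow>
               (\<forall>j\<in>smallest (t + 1) S. \<exists>s'\<le>s. \<exists>y. rbc_out i j = Some (s', y)) \<longrightarrow>
               (\<exists>r\<le>s. out i = Some (r, Some (Dec (\<lambda>j. snd (the (rbc_out i j))) (smallest (t + 1) S)))))))"

end

theory Submission
  imports Defs
begin

text \<open>Every honest node delivers the RBC of every honest leader, hence inputs into (and gets
  an output of) every ABBA instance with an honest leader; these are at least n - t outputs, so
  step (3) makes it input into all remaining instances, and then all n ABBA instances terminate.
  If ABBA_j outputs 1, not all honest inputs were 0, so some honest node input 1, which it only
  does after delivering RBC_j; by totality every honest node delivers RBC_j, so the wait in
  step (4) ends.\<close>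

lemma ex_common_time:
  fixes Q :: "'a \<Rightarrow> nat \<Rightarrow> bool"
  assumes "finite A" "\<forall>j\<in>A. \<exists>s. Q j s"
  shows "\<exists>s. \<forall>j\<in>A. \<exists>s'\<le>s. Q j s'"
proof -
  from assms(2) obtain T where T: "\<forall>j\<in>A. Q j (T j)" by metis
  have "\<forall>j\<in>A. T j \<le> Max (T ` A)" using assms(1) by simp
  with T show ?thesis by blast
qed

lemma honest_subset: "honest n F \<subseteq> {1..n}"
  unfolding honest_def by auto

lemma card_honest_ge:
  assumes "F \<subseteq> {1..n}" "card F \<le> t"
  shows "n - t \<le> card (honest n F)"
proof -
  have "card (honest n F) = n - card F"
    using assms(1) unfolding honest_def by (simp add: card_Diff_subset finite_subset)
  then show ?thesis using assms(2) by simp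
qed

lemma has_out_by_common_time:
  assumes "finite A" "\<forall>j\<in>A. abba_out i j \<noteq> None"
  shows "\<exists>s. \<forall>j\<in>A. has_out_by abba_out i j s"
proof -
  have "\<forall>j\<in>A. \<exists>s b. abba_out i j = Some (s, b)" using assms(2) by auto
  from ex_common_time[OF assms(1) this] show ?thesis unfolding has_out_by_def by blast
qed

locale ociorABA_execution =
  fixes n t :: nat and F :: "nat set"
    and Enc :: "'m \<Rightarrow> nat \<Rightarrow> 's" and Dec :: "(nat \<Rightarrow> 's) \<Rightarrow> nat set \<Rightarrow> 'm"
    and rbc_in :: "nat \<Rightarrow> (nat \<times> 's) option"
    and rbc_out :: "nat \<Rightarrow> nat \<Rightarrow> (nat \<times> 's) option"
    and abba_in abba_out :: "nat \<Rightarrow> nat \<Rightarrow> (nat \<times> bool) option"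
    and out :: "nat \<Rightarrow> (nat \<times> 'm option) option"
  assumes F_subset: "F \<subseteq> {1..n}" and card_F: "card F \<le> t"
    and rbc: "RBC_props n F rbc_in rbc_out"
    and abba: "ABBA_props n F abba_in abba_out"
    and protocol: "i \<in> honest n F \<Longrightarrow>
      \<exists>tau w. follows_protocol n t Enc Dec i tau w rbc_in rbc_out abba_in abba_out out"
begin

lemma rbc_validity:
  assumes "j \<in> honest n F" "rbc_in j = Some (s, w)" "i \<in> honest n F"
  shows "rbc_out i j \<noteq> None"
  using rbc assms honest_subset unfolding RBC_props_def by blast

lemma rbc_totality:
  assumes "j \<in> {1..n}" "i' \<in> honest n F" "rbc_out i' j \<noteq> None" "i \<in> honest n F"
  shows "rbc_out i j \<noteq> None"
  using rbc assms unfolding RBC_props_def by blast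

lemma abba_termination:
  assumes "j \<in> {1..n}" "\<And>i'. i' \<in> honest n F \<Longrightarrow> abba_in i' j \<noteq> None" "i \<in> honest n F"
  shows "abba_out i j \<noteq> None"
  using abba assms unfolding ABBA_props_def by blast

lemma abba_validity:
  assumes "j \<in> {1..n}" "\<And>i'. i' \<in> honest n F \<Longrightarrow> \<exists>s. abba_in i' j = Some (s, b)"
    "i \<in> honest n F"
  shows "\<exists>s. abba_out i j = Some (s, b)"
  using abba assms unfolding ABBA_props_def by blast

lemma honest_rbc_input:
  assumes "i \<in> honest n F"
  obtains s w where "rbc_in i = Some (s, w)"
proof -
  obtain tau w where "follows_protocol n t Enc Dec i tau w rbc_in rbc_out abba_in abba_out out"
    using protocol[OF assms] by blast
  then have "rbc_in i = Some (tau, Enc w i)" unfolding follows_protocol_def by (elim conjE)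
  then show ?thesis by (rule that)
qed

lemma honest_abba_input_on_delivery:
  assumes "i \<in> honest n F" "j \<in> {1..n}" "rbc_out i j \<noteq> None"
  shows "abba_in i j \<noteq> None"
proof -
  obtain tau w where "follows_protocol n t Enc Dec i tau w rbc_in rbc_out abba_in abba_out out"
    using protocol[OF assms(1)] by blast
  then have "\<forall>j\<in>{1..n}. \<forall>s y. rbc_out i j = Some (s, y) \<longrightarrow>
      (\<exists>r b. r \<le> max s tau \<and> abba_in i j = Some (r, b))"
    unfolding follows_protocol_def by (elim conjE)
  then show ?thesis using assms(2,3) by fastforce
qed

lemma honest_abba_input_on_quorum:
  assumes "i \<in> honest n F" "n - t \<le> card {j'\<in>{1..n}. has_out_by abba_out i j' s}" "j \<in> {1..n}"
  shows "abba_in i j \<noteq> None"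
proof -
  obtain tau w where "follows_protocol n t Enc Dec i tau w rbc_in rbc_out abba_in abba_out out"
    using protocol[OF assms(1)] by blast
  then have "\<forall>s. card {j\<in>{1..n}. has_out_by abba_out i j s} \<ge> n - t \<longrightarrow>
      (\<forall>j\<in>{1..n}. \<exists>r b. r \<le> s \<and> abba_in i j = Some (r, b))"
    unfolding follows_protocol_def by (elim conjE)
  then show ?thesis using assms(2,3) by fastforce
qed

text \<open>Step (3) only ever inputs 0, so an honest input 1 comes from step (2).\<close>
lemma honest_abba_input_true:
  assumes "i \<in> honest n F" "j \<in> {1..n}" "abba_in i j = Some (r, True)"
  shows "rbc_out i j \<noteq> None"
proof -
  obtain tau w where "follows_protocol n t Enc Dec i tau w rbc_in rbc_out abba_in abba_out out"
    using protocol[OF assms(1)] by blast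
  then have "\<forall>j\<in>{1..n}. \<forall>r b. abba_in i j = Some (r, b) \<longrightarrow>
      (\<exists>s y. rbc_out i j = Some (s, y) \<and> s \<le> r \<and> tau \<le> r \<and> b = (y = Enc w j))
    \<or> (b = False \<and> card {j'\<in>{1..n}. has_out_by abba_out i j' r} \<ge> n - t)"
    unfolding follows_protocol_def by (elim conjE)
  then show ?thesis using assms(2,3) by fastforce
qed

lemma honest_output:
  assumes "i \<in> honest n F" "\<forall>j\<in>{1..n}. has_out_by abba_out i j s"
    and "\<forall>j\<in>smallest (t + 1) {j\<in>{1..n}. \<exists>s'. abba_out i j = Some (s', True)}.
           \<exists>s'\<le>s. \<exists>y. rbc_out i j = Some (s', y)"
  shows "\<exists>r v. out i = Some (r, v)"
proof -
  obtain tau w where "follows_protocol n t Enc Dec i tau w rbc_in rbc_out abba_in abba_out out"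
    using protocol[OF assms(1)] by blast
  then have "\<forall>s. (\<forall>j\<in>{1..n}. has_out_by abba_out i j s) \<longrightarrow>
      (let S = {j\<in>{1..n}. \<exists>s'. abba_out i j = Some (s', True)} in
        (card S < t + 1 \<longrightarrow> (\<exists>r\<le>s. out i = Some (r, None)))
      \<and> (card S \<ge> t + 1 \<longrightarrow>
           (\<forall>j\<in>smallest (t + 1) S. \<exists>s'\<le>s. \<exists>y. rbc_out i j = Some (s', y)) \<longrightarrow>
           (\<exists>r\<le>s. out i = Some (r, Some (Dec (\<lambda>j. snd (the (rbc_out i j))) (smallest (t + 1) S))))))"
    unfolding follows_protocol_def by (elim conjE)
  then have "(\<exists>r\<le>s. out i = Some (r, None))
      \<or> (\<exists>r\<le>s. out i = Some (r, Some (Dec (\<lambda>j. snd (the (rbc_out i j)))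
            (smallest (t + 1) {j\<in>{1..n}. \<exists>s'. abba_out i j = Some (s', True)}))))"
    using assms(2,3) unfolding Let_def by (meson not_less)
  then show ?thesis by blast
qed

lemma honest_rbc_delivered:
  assumes "j \<in> honest n F" "i \<in> honest n F"
  shows "rbc_out i j \<noteq> None"
proof -
  obtain s w where "rbc_in j = Some (s, w)" using honest_rbc_input[OF assms(1)] .
  from rbc_validity[OF assms(1) this assms(2)] show ?thesis .
qed

lemma honest_abba_output:
  assumes "j \<in> honest n F" "i \<in> honest n F"
  shows "abba_out i j \<noteq> None"
proof (rule abba_termination)
  show "j \<in> {1..n}" using assms(1) honest_subset by blast
  fix i' assume "i' \<in> honest n F"
  with \<open>j \<in> {1..n}\<close> show "abba_in i' j \<noteq> None"
    using honest_abba_input_on_delivery honest_rbc_delivered[OF assms(1)] by blast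
qed (fact assms(2))

lemma quorum_of_abba_outputs:
  assumes "i \<in> honest n F"
  shows "\<exists>s. n - t \<le> card {j\<in>{1..n}. has_out_by abba_out i j s}"
proof -
  have "\<exists>s. \<forall>j\<in>honest n F. has_out_by abba_out i j s"
    using finite_subset[OF honest_subset] honest_abba_output assms
    by (intro has_out_by_common_time) auto
  then obtain s where "honest n F \<subseteq> {j\<in>{1..n}. has_out_by abba_out i j s}"
    using honest_subset by blast
  then have "card (honest n F) \<le> card {j\<in>{1..n}. has_out_by abba_out i j s}"
    by (intro card_mono) auto
  then show ?thesis using card_honest_ge[OF F_subset card_F] order_trans by blast
qed

lemma all_abba_input:
  assumes "i \<in> honest n F" "j \<in> {1..n}"
  shows "abba_in i j \<noteq> None"
  using quorum_of_abba_outputs[OF assms(1)] honest_abba_input_on_quorum[OF assms(1) _ assms(2)]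
  by blast

lemma all_abba_output:
  assumes "i \<in> honest n F" "j \<in> {1..n}"
  shows "abba_out i j \<noteq> None"
  using abba_termination[OF assms(2) all_abba_input[OF _ assms(2)] assms(1)] .

lemma abba_output_true_delivered:
  assumes "i \<in> honest n F" "j \<in> {1..n}" "abba_out i j = Some (s, True)"
  shows "rbc_out i j \<noteq> None"
proof -
  have "\<not> (\<forall>i'\<in>honest n F. \<exists>s. abba_in i' j = Some (s, False))"
    using abba_validity[of j False i] assms by auto
  then obtain i' r where "i' \<in> honest n F" "abba_in i' j = Some (r, True)"
    using all_abba_input assms(2) by fastforce
  then have "rbc_out i' j \<noteq> None" using honest_abba_input_true assms(2) by blast
  with \<open>i' \<in> honest n F\<close> show ?thesis using rbc_totality assms(1,2) by blast
qed

theorem honest_terminates: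
  assumes "i \<in> honest n F"
  shows "\<exists>r v. out i = Some (r, v)"
proof -
  define S where "S = {j\<in>{1..n}. \<exists>s'. abba_out i j = Some (s', True)}"
  define K where "K = smallest (t + 1) S"
  have "finite K"
    unfolding K_def smallest_def S_def by (rule finite_subset[OF _ finite_atLeastAtMost]) blast
  have "\<forall>j\<in>K. \<exists>s y. rbc_out i j = Some (s, y)"
  proof
    fix j assume "j \<in> K"
    then obtain s where "j \<in> {1..n}" "abba_out i j = Some (s, True)"
      unfolding K_def smallest_def S_def by blast
    then have "rbc_out i j \<noteq> None" by (rule abba_output_true_delivered[OF assms])
    then show "\<exists>s y. rbc_out i j = Some (s, y)" by auto
  qed
  from ex_common_time[OF \<open>finite K\<close> this]
  obtain s\<^sub>r where "\<forall>j\<in>K. \<exists>s'\<le>s\<^sub>r. \<exists>y. rbc_out i j = Some (s', y)"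
    by blast
  moreover obtain s\<^sub>a where "\<forall>j\<in>{1..n}. has_out_by abba_out i j s\<^sub>a"
    using has_out_by_common_time[OF finite_atLeastAtMost] all_abba_output[OF assms] by blast
  ultimately have "\<forall>j\<in>{1..n}. has_out_by abba_out i j (max s\<^sub>a s\<^sub>r)"
    and "\<forall>j\<in>K. \<exists>s'\<le>max s\<^sub>a s\<^sub>r. \<exists>y. rbc_out i j = Some (s', y)"
    unfolding has_out_by_def by (fastforce simp: le_max_iff_disj)+
  then show ?thesis by (rule honest_output[OF assms, folded S_def K_def])
qed

end

theorem theorem1:
  fixes n t :: nat and F :: "nat set"
    and Enc :: "'m \<Rightarrow> nat \<Rightarrow> 's" and Dec :: "(nat \<Rightarrow> 's) \<Rightarrow> nat set \<Rightarrow> 'm"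
    and inp :: "nat \<Rightarrow> (nat \<times> 'm) option"
    and rbc_in :: "nat \<Rightarrow> (nat \<times> 's) option"
    and rbc_out :: "nat \<Rightarrow> nat \<Rightarrow> (nat \<times> 's) option"
    and abba_in abba_out :: "nat \<Rightarrow> nat \<Rightarrow> (nat \<times> bool) option"
    and out :: "nat \<Rightarrow> (nat \<times> 'm option) option"
  assumes "n \<ge> 3 * t + 1"
    and "F \<subseteq> {1..n}" and "card F \<le> t"
    and "erasure_code n t Enc Dec"
    and "RBC_props n F rbc_in rbc_out"
    and "ABBA_props n F abba_in abba_out"
    and "\<forall>i\<in>honest n F. \<forall>tau w. inp i = Some (tau, w) \<longrightarrow>
            follows_protocol n t Enc Dec i tau w rbc_in rbc_out abba_in abba_out out"
    and "\<forall>i\<in>honest n F. inp i \<noteq> None"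
  shows "\<forall>i\<in>honest n F. \<exists>r v. out i = Some (r, v)"
proof -
  have "ociorABA_execution n t F Enc Dec rbc_in rbc_out abba_in abba_out out"
  proof
    fix i assume "i \<in> honest n F"
    then show "\<exists>tau w. follows_protocol n t Enc Dec i tau w rbc_in rbc_out abba_in abba_out out"
      using assms(7,8) by fastforce
  qed (use assms(2,3,5,6) in auto)
  then show ?thesis using ociorABA_execution.honest_terminates by blast
qed

end
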